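(* Suppose $x^*\sim\mathcal{N}(\mu\mathbf{1}_n,\mathrm{diag}(s_1^2,\dots,s_n^2))$ for some $\mu\in\mathbb{R}$, $s_i\ge0$, and that $x^*$ is independent of the noise $e$, which has mean $0$ and covariance $\Sigma=\mathrm{diag}(\sigma_1^2,\dots,\sigma_n^2)$ with $\sigma_1^2\ge\cdots\ge\sigma_n^2\ge0$. Let $\bar s=\frac1n\sum_{i=1}^ns_i^2$ and $\bar\sigma=\frac{1}{n-1}\sum_{i=2}^n\sigma_i^2$. Then for every $\alpha>0$, $$\mathrm{MSE}(\alpha)\le\Big(\frac{1}{1+\frac{1}{\alpha\lambda_n}}\Big)^2(n-1)\bar s+\Big(\frac{1}{1+\alpha\lambda_2}\Big)^2(n-1)\bar\sigma+\sigma_1^2.$$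
   Context: Let $G$ be a weighted undirected connected simple graph on $n\ge2$ nodes with symmetric weight matrix $W$ (zero diagonal, $W_{ij}>0$ exactly on edges) and Laplacian $L=\mathrm{diag}(W\mathbf{1}_n)-W$, whose eigenvalues are $0=\lambda_1<\lambda_2\le\cdots\le\lambda_n$. Observation model: $y=x^*+e$. For $\alpha>0$, $\hat x=(I+\alpha L)^{-1}y$ and $\mathrm{MSE}(\alpha)=\mathbb{E}\|\hat x-x^*\|_2^2$, where the expectation is over both $x^*$ and $e$. *)

theory Defs
  imports "HOL-Probability.Probability"
    "Jordan_Normal_Form.Char_Poly"
    "Jordan_Normal_Form.Gauss_Jordan_Elimination"
begin

(* Nodes are 0,...,n-1 (paper: 1,...,n). *)

definition graph_edges :: "nat \<Rightarrow> real mat \<Rightarrow> (nat \<times> nat) set" where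
  "graph_edges n W = {(i, j). i < n \<and> j < n \<and> W $$ (i, j) > 0}"

definition weighted_connected_graph :: "nat \<Rightarrow> real mat \<Rightarrow> bool" where
  "weighted_connected_graph n W \<longleftrightarrow>
     W \<in> carrier_mat n n \<and>
     (\<forall>i<n. \<forall>j<n. W $$ (i, j) = W $$ (j, i)) \<and>
     (\<forall>i<n. W $$ (i, i) = 0) \<and>
     (\<forall>i<n. \<forall>j<n. W $$ (i, j) \<ge> 0) \<and>
     (\<forall>i<n. \<forall>j<n. (i, j) \<in> (graph_edges n W)\<^sup>*)"

definition laplacian :: "nat \<Rightarrow> real mat \<Rightarrow> real mat" where
  "laplacian n W = mat n n (\<lambda>(i, j). (if i = j then (\<Sum>k<n. W $$ (i, k)) else 0) - W $$ (i, j))"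

(* eigenvalues (with multiplicity) in increasing order: lambda_k = eigs ! (k-1) *)
definition eigs :: "real mat \<Rightarrow> real list" where
  "eigs A = sorted_list_of_multiset (proots (char_poly A))"

definition gaussian :: "real \<Rightarrow> real \<Rightarrow> real measure" where
  "gaussian m s = (if s = 0 then return borel m else density lborel (normal_density m s))"

definition smoothing_mse ::
  "'w measure \<Rightarrow> nat \<Rightarrow> real mat \<Rightarrow> (nat \<Rightarrow> 'w \<Rightarrow> real) \<Rightarrow> (nat \<Rightarrow> 'w \<Rightarrow> real) \<Rightarrow> real \<Rightarrow> real"
  where
  "smoothing_mse M n W X E \<alpha> =
     integral\<^sup>L M (\<lambda>\<omega>.
       let y = vec n (\<lambda>j. X j \<omega> + E j \<omega>);
           xh = the (mat_inverse (1\<^sub>m n + \<alpha> \<cdot>\<^sub>m laplacian n W)) *\<^sub>v y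
       in \<Sum>i<n. (xh $ i - X i \<omega>)\<^sup>2)"

end

theory Submission
  imports Defs "HOL-Combinatorics.List_Permutation"
begin

unbundle no vec_syntax

text \<open>
  Diagonalise the Laplacian as L = U diag(\<lambda>) U^T with U orthogonal and \<lambda> sorted; then
  H = (I + \<alpha> L)^-1 = U diag(h) U^T with responses h_k = 1 / (1 + \<alpha> \<lambda>_k). Since L annihilates
  the all-ones vector, H has unit row sums, so the error of the estimate is (H - I)(x* - \<mu> 1) + H e;
  as x* and e are independent with uncorrelated components,
  MSE = \<Sum>_j s_j^2 |col_j (H - I)|^2 + \<sigma>_j^2 |col_j H|^2.
  Each squared column norm is an average of squared responses with weights U_jk^2.
  For H - I the response 1 - h_k is at most 1 / (1 + 1/(\<alpha> \<lambda>_n)) and vanishes on the kernel, which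
  carries weight at least 1/n since it contains the unit vector 1/sqrt n. For H the response h_k is
  at most 1 / (1 + \<alpha> \<lambda>_2) except on the first eigenvector, whose weight is exactly 1/n when
  \<lambda>_2 > 0. Finally, as the noise variances decrease, the weight 1/n that the variance term puts on each
  of them can be moved onto the largest one, \<sigma>_1^2.
\<close>

section \<open>Spectral theorem for real symmetric matrices\<close>

lemma sum_mult_delta:
  "l < (n::nat) \<Longrightarrow> (\<Sum>p<n. f p * (if l = p then 1 else (0::real))) = f l"
  by (simp add: if_distrib sum.delta sum.delta' cong: if_cong)

lemma sum_mult_delta':
  "l < (n::nat) \<Longrightarrow> (\<Sum>p<n. f p * (if p = l then 1 else (0::real))) = f l"
  by (simp add: if_distrib sum.delta sum.delta' cong: if_cong)

lemma symmetric_eigenvalue_real: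
  fixes C :: "real mat" and v :: "complex vec"
  assumes sym: "\<forall>i<m. \<forall>j<m. C $$ (i, j) = C $$ (j, i)"
    and ev: "\<And>i. i < m \<Longrightarrow> (\<Sum>j<m. complex_of_real (C $$ (i, j)) * v $ j) = la * v $ i"
    and nz: "i0 < m" "v $ i0 \<noteq> 0"
  shows "Im la = 0"
proof -
  define S where "S = (\<Sum>i<m. \<Sum>j<m. complex_of_real (C $$ (i, j)) * cnj (v $ i) * v $ j)"
  define N where "N = (\<Sum>i<m. (cmod (v $ i))\<^sup>2)"
  have "cnj S = (\<Sum>i<m. \<Sum>j<m. complex_of_real (C $$ (i, j)) * v $ i * cnj (v $ j))"
    unfolding S_def by (simp add: cnj_sum)
  also have "\<dots> = (\<Sum>j<m. \<Sum>i<m. complex_of_real (C $$ (i, j)) * v $ i * cnj (v $ j))"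
    by (rule sum.swap)
  also have "\<dots> = S"
    unfolding S_def using sym by (intro sum.cong refl) (auto simp: mult_ac)
  finally have S_real: "Im S = 0"
    by (metis Reals_cnj_iff complex_is_Real_iff)
  have "S = (\<Sum>i<m. cnj (v $ i) * (\<Sum>j<m. complex_of_real (C $$ (i, j)) * v $ j))"
    unfolding S_def by (simp add: sum_distrib_left mult_ac)
  also have "\<dots> = (\<Sum>i<m. la * (cnj (v $ i) * v $ i))"
    using ev by (intro sum.cong refl) (simp add: mult_ac)
  also have "\<dots> = la * complex_of_real N"
    unfolding N_def by (simp add: sum_distrib_left complex_norm_square[symmetric] mult_ac)
  finally have "Im la * N = 0"
    using S_real by simp
  moreover have "N > 0"
    unfolding N_def using nz by (intro sum_pos2[of _ i0]) auto
  ultimately show ?thesis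
    by simp
qed

lemma complex_eigenvector_exists:
  fixes C :: "real mat"
  assumes C: "C \<in> carrier_mat m m" and m: "m > 0"
  obtains la v i0 where "i0 < m" "v $ i0 \<noteq> 0"
    "\<And>i. i < m \<Longrightarrow> (\<Sum>j<m. complex_of_real (C $$ (i, j)) * v $ j) = la * v $ i"
proof -
  define Cc where "Cc = map_mat complex_of_real C"
  have Cc: "Cc \<in> carrier_mat m m"
    using C unfolding Cc_def by auto
  obtain as where as: "char_poly Cc = (\<Prod>a\<leftarrow>as. [:- a, 1:])" "length as = m"
    using char_poly_factorized[OF Cc] by blast
  then obtain la as' where "as = la # as'"
    using m by (cases as) auto
  then have "poly (char_poly Cc) la = 0"
    unfolding as(1) by simp
  then have "eigenvalue Cc la"
    using eigenvalue_root_char_poly[OF Cc] by simp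
  then obtain v where "eigenvector Cc v la"
    using find_eigenvector[OF Cc] by blast
  then have v: "v \<in> carrier_vec m" "v \<noteq> 0\<^sub>v m" "Cc *\<^sub>v v = la \<cdot>\<^sub>v v"
    unfolding eigenvector_def using Cc by auto
  obtain i0 where "i0 < m" "v $ i0 \<noteq> 0"
    using v(1,2) by (metis carrier_vecD eq_vecI index_zero_vec)
  moreover have "(\<Sum>j<m. complex_of_real (C $$ (i, j)) * v $ j) = la * v $ i" if i: "i < m" for i
  proof -
    have "(\<Sum>j<m. complex_of_real (C $$ (i, j)) * v $ j) = (Cc *\<^sub>v v) $ i"
      using i v(1) C unfolding Cc_def by (auto simp: scalar_prod_def atLeast0LessThan mult_ac)
    also have "\<dots> = la * v $ i"
      using i v by simp
    finally show ?thesis .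
  qed
  ultimately show ?thesis
    using that by blast
qed

lemma symmetric_real_eigenvector:
  fixes C :: "real mat"
  assumes C: "C \<in> carrier_mat m m" and m: "m > 0"
    and sym: "\<forall>i<m. \<forall>j<m. C $$ (i, j) = C $$ (j, i)"
  obtains lam w i0 where "i0 < m" "w i0 \<noteq> 0"
    "\<And>i. i < m \<Longrightarrow> (\<Sum>j<m. C $$ (i, j) * w j) = lam * w i"
proof -
  obtain la v i0 where i0: "i0 < m" "v $ i0 \<noteq> 0"
    and ev: "\<And>i. i < m \<Longrightarrow> (\<Sum>j<m. complex_of_real (C $$ (i, j)) * v $ j) = la * v $ i"
    using complex_eigenvector_exists[OF C m] by metis
  have la: "la = complex_of_real (Re la)"
    using symmetric_eigenvalue_real[OF sym ev i0] by (simp add: complex_eq_iff)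
  have re: "(\<Sum>j<m. C $$ (i, j) * Re (v $ j)) = Re la * Re (v $ i)"
    and im: "(\<Sum>j<m. C $$ (i, j) * Im (v $ j)) = Re la * Im (v $ i)" if "i < m" for i
  proof -
    have "(\<Sum>j<m. complex_of_real (C $$ (i, j)) * v $ j) = complex_of_real (Re la) * v $ i"
      using ev[OF that] la by simp
    from arg_cong[OF this, of Re] arg_cong[OF this, of Im]
    show "(\<Sum>j<m. C $$ (i, j) * Re (v $ j)) = Re la * Re (v $ i)"
      "(\<Sum>j<m. C $$ (i, j) * Im (v $ j)) = Re la * Im (v $ i)"
      by (simp_all add: Re_sum Im_sum)
  qed
  show ?thesis
  proof (cases "Re (v $ i0) = 0")
    case True
    then have "Im (v $ i0) \<noteq> 0"
      using i0 by (simp add: complex_eq_iff)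
    with i0 im show ?thesis
      by (intro that[of i0 "\<lambda>j. Im (v $ j)"]) auto
  next
    case False
    with i0 re show ?thesis
      by (intro that[of i0 "\<lambda>j. Re (v $ j)"]) auto
  qed
qed

lemma symmetric_unit_eigenvector:
  fixes C :: "real mat"
  assumes "C \<in> carrier_mat m m" "m > 0" "\<forall>i<m. \<forall>j<m. C $$ (i, j) = C $$ (j, i)"
  obtains lam c where "(\<Sum>i<m. (c i)\<^sup>2) = 1"
    "\<And>i. i < m \<Longrightarrow> (\<Sum>j<m. C $$ (i, j) * c j) = lam * c i"
proof -
  obtain i0 w lam where w: "i0 < m" "w i0 \<noteq> 0"
    "\<And>i. i < m \<Longrightarrow> (\<Sum>j<m. C $$ (i, j) * w j) = lam * w i"
    using symmetric_real_eigenvector[OF assms] by metis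
  define q where "q = (\<Sum>i<m. (w i)\<^sup>2)"
  have "q > 0"
    unfolding q_def using w by (intro sum_pos2[of _ i0]) auto
  show ?thesis
  proof (rule that[of "\<lambda>i. w i / sqrt q" lam])
    show "(\<Sum>i<m. (w i / sqrt q)\<^sup>2) = 1"
      using \<open>q > 0\<close> by (simp add: power_divide sum_divide_distrib[symmetric] q_def[symmetric])
    show "(\<Sum>j<m. C $$ (i, j) * (w j / sqrt q)) = lam * (w i / sqrt q)" if "i < m" for i
      using w(3)[OF that] by (simp add: sum_divide_distrib[symmetric])
  qed
qed

text \<open>Square matrices in the spectral argument are functions of two indices below n.
  Both U^T U = I and U U^T = I are required, so that no rank argument is needed.\<close>

definition orthogonal_fun :: "nat \<Rightarrow> (nat \<Rightarrow> nat \<Rightarrow> real) \<Rightarrow> bool" where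
  "orthogonal_fun n U \<longleftrightarrow>
     (\<forall>i<n. \<forall>j<n. (\<Sum>r<n. U r i * U r j) = (if i = j then 1 else 0)) \<and>
     (\<forall>i<n. \<forall>j<n. (\<Sum>r<n. U i r * U j r) = (if i = j then 1 else 0))"

lemma orthogonal_funD:
  assumes "orthogonal_fun n U" "i < n" "j < n"
  shows "(\<Sum>r<n. U r i * U r j) = (if i = j then 1 else 0)"
    and "(\<Sum>r<n. U i r * U j r) = (if i = j then 1 else 0)"
  using assms unfolding orthogonal_fun_def by auto

lemma sum_product_swap:
  fixes a b :: "nat \<Rightarrow> nat \<Rightarrow> real"
  shows "(\<Sum>r<n. (\<Sum>l<n. a r l * x l) * (\<Sum>p<n. b r p * y p)) =
         (\<Sum>l<n. \<Sum>p<n. x l * y p * (\<Sum>r<n. a r l * b r p))"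
proof -
  have "(\<Sum>r<n. (\<Sum>l<n. a r l * x l) * (\<Sum>p<n. b r p * y p)) =
        (\<Sum>r<n. \<Sum>l<n. \<Sum>p<n. x l * y p * (a r l * b r p))"
    by (simp add: sum_product mult_ac)
  also have "\<dots> = (\<Sum>l<n. \<Sum>r<n. \<Sum>p<n. x l * y p * (a r l * b r p))"
    by (rule sum.swap)
  also have "\<dots> = (\<Sum>l<n. \<Sum>p<n. \<Sum>r<n. x l * y p * (a r l * b r p))"
    by (intro sum.cong refl sum.swap)
  finally show ?thesis
    by (simp add: sum_distrib_left)
qed

lemma orthogonal_fun_mult:
  assumes U: "orthogonal_fun n U" and V: "orthogonal_fun n V"
  shows "orthogonal_fun n (\<lambda>r j. \<Sum>l<n. U r l * V l j)"
proof -
  have cols: "(\<Sum>r<n. (\<Sum>l<n. U r l * V l i) * (\<Sum>p<n. U r p * V p j)) = (if i = j then 1 else 0)"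
    if "i < n" "j < n" for i j
  proof -
    have "(\<Sum>r<n. (\<Sum>l<n. U r l * V l i) * (\<Sum>p<n. U r p * V p j)) =
          (\<Sum>l<n. \<Sum>p<n. V l i * V p j * (\<Sum>r<n. U r l * U r p))"
      by (rule sum_product_swap)
    also have "\<dots> = (\<Sum>l<n. V l i * V l j)"
      using U by (simp add: orthogonal_funD sum_mult_delta)
    finally show ?thesis
      using V that by (simp add: orthogonal_funD)
  qed
  have rows: "(\<Sum>j<n. (\<Sum>l<n. U r l * V l j) * (\<Sum>p<n. U t p * V p j)) = (if r = t then 1 else 0)"
    if "r < n" "t < n" for r t
  proof -
    have "(\<Sum>j<n. (\<Sum>l<n. U r l * V l j) * (\<Sum>p<n. U t p * V p j)) =
          (\<Sum>l<n. \<Sum>p<n. U r l * U t p * (\<Sum>j<n. V l j * V p j))"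
      using sum_product_swap[where a="\<lambda>j l. V l j" and x="U r" and b="\<lambda>j p. V p j" and y="U t"]
      by (simp add: mult_ac)
    also have "\<dots> = (\<Sum>l<n. U r l * U t l)"
      using V by (simp add: orthogonal_funD sum_mult_delta)
    finally show ?thesis
      using U that by (simp add: orthogonal_funD)
  qed
  show ?thesis
    unfolding orthogonal_fun_def using cols rows by auto
qed

lemma orthogonal_fun_id: "orthogonal_fun n (\<lambda>i j. if i = j then 1 else 0)"
proof -
  have "(\<Sum>r<n. (if r = i then 1 else 0) * (if r = j then 1 else (0::real))) = (if i = j then 1 else 0)"
    if "j < n" for i j
    using sum_mult_delta'[OF that, of "\<lambda>r. if r = i then 1 else 0"] by simp
  moreover have "(\<Sum>r<n. (if i = r then 1 else 0) * (if j = r then 1 else (0::real))) = (if i = j then 1 else 0)"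
    if "j < n" for i j
    using sum_mult_delta[OF that, of "\<lambda>r. if i = r then 1 else 0"] by simp
  ultimately show ?thesis
    unfolding orthogonal_fun_def by auto
qed

text \<open>For w = 0 the division by zero yields 0, so the reflection degenerates to the identity.\<close>

definition householder :: "nat \<Rightarrow> (nat \<Rightarrow> real) \<Rightarrow> nat \<Rightarrow> nat \<Rightarrow> real" where
  "householder n w i j = (if i = j then 1 else 0) - 2 * w i * w j / (\<Sum>l<n. (w l)\<^sup>2)"

lemma orthogonal_fun_householder: "orthogonal_fun n (householder n w)"
proof (cases "(\<Sum>l<n. (w l)\<^sup>2) = 0")
  case True
  then show ?thesis
    using orthogonal_fun_id by (simp add: householder_def[abs_def])
next
  case False
  define s where "s = (\<Sum>l<n. (w l)\<^sup>2)"
  have H: "householder n w = (\<lambda>i j. (if i = j then 1 else 0) - 2 * w i * w j / s)"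
    unfolding householder_def[abs_def] s_def[symmetric] ..
  have "(\<Sum>l<n. ((if l = i then 1 else 0) - 2 * w l * w i / s) *
                ((if l = j then 1 else 0) - 2 * w l * w j / s)) = (if i = j then 1 else 0)"
    if "i < n" "j < n" for i j
  proof -
    have "(\<Sum>l<n. (2 * w l * w i / s) * (2 * w l * w j / s)) = 4 * w i * w j * s / s\<^sup>2"
      unfolding s_def by (simp add: sum_distrib_left sum_divide_distrib power2_eq_square mult_ac)
    also have "\<dots> = 4 * w i * w j / s"
      using False s_def by (simp add: power2_eq_square)
    finally have "(\<Sum>l<n. (2 * w l * w i / s) * (2 * w l * w j / s)) = 4 * w i * w j / s" .
    moreover have "(\<Sum>l<n. (if l = i then 1 else 0) * (if l = j then 1 else (0::real))) = (if i = j then 1 else 0)"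
      using that sum_mult_delta'[of j n "\<lambda>l. if l = i then 1 else 0"] by simp
    moreover have "(\<Sum>l<n. (if l = i then 1 else 0) * (2 * w l * w j / s)) = 2 * w i * w j / s"
      using that sum_mult_delta'[of i n "\<lambda>l. 2 * w l * w j / s"] by (simp add: mult.commute)
    moreover have "(\<Sum>l<n. (2 * w l * w i / s) * (if l = j then 1 else 0)) = 2 * w i * w j / s"
      using that sum_mult_delta'[of j n "\<lambda>l. 2 * w l * w i / s"] by (simp add: mult.commute)
    ultimately show ?thesis
      by (simp add: algebra_simps sum_subtractf sum.distrib)
  qed
  then have "(\<Sum>r<n. householder n w r i * householder n w r j) = (if i = j then 1 else 0)"
    if "i < n" "j < n" for i j
    using that by (simp add: H)
  moreover have "householder n w i j = householder n w j i" for i j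
    by (simp add: H mult_ac)
  ultimately show ?thesis
    unfolding orthogonal_fun_def by auto
qed

lemma householder_col_unit:
  assumes "w j = 0"
  shows "householder n w l j = (if l = j then 1 else 0)"
  using assms unfolding householder_def by simp

lemma householder_reflects_unit:
  assumes z: "(\<Sum>l<n. (z l)\<^sup>2) = 1" and k: "k < n" and l: "l < n"
  shows "householder n (\<lambda>l. z l - (if l = k then 1 else 0)) l k = z l"
proof -
  define w where "w l = z l - (if l = k then 1 else 0)" for l
  define s where "s = (\<Sum>l<n. (w l)\<^sup>2)"
  have s_eq: "s = 2 - 2 * z k"
  proof -
    have "s = (\<Sum>l<n. (z l)\<^sup>2 - 2 * (z l * (if l = k then 1 else 0)) + (if l = k then 1 else 0))"
      unfolding s_def w_def by (intro sum.cong refl) (auto simp: power2_eq_square algebra_simps)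
    also have "\<dots> = 2 - 2 * z k"
      using z k by (simp add: sum.distrib sum_subtractf sum_distrib_left[symmetric] sum_mult_delta')
    finally show ?thesis .
  qed
  show ?thesis
  proof (cases "s = 0")
    case True
    then have "w l = 0"
      using l unfolding s_def by (simp add: sum_nonneg_eq_0_iff)
    then show ?thesis
      using True unfolding householder_def s_def[symmetric] w_def[symmetric] by (simp add: w_def)
  next
    case False
    then have "z k \<noteq> 1"
      using s_eq by auto
    then show ?thesis
      using False unfolding householder_def s_def[symmetric] w_def[symmetric] s_eq
      by (simp add: w_def field_simps)
  qed
qed

definition orth_conj :: "nat \<Rightarrow> (nat \<Rightarrow> nat \<Rightarrow> real) \<Rightarrow> (nat \<Rightarrow> nat \<Rightarrow> real) \<Rightarrow> nat \<Rightarrow> nat \<Rightarrow> real" where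
  "orth_conj n U A i j = (\<Sum>s<n. (\<Sum>r<n. U r i * A r s) * U s j)"

lemma orth_conj_symmetric:
  assumes "\<forall>i<n. \<forall>j<n. A i j = A j i" "i < n" "j < n"
  shows "orth_conj n U A i j = orth_conj n U A j i"
proof -
  have "orth_conj n U A i j = (\<Sum>r<n. \<Sum>s<n. U r i * A r s * U s j)"
    unfolding orth_conj_def by (subst sum.swap) (simp add: sum_distrib_right)
  also have "\<dots> = (\<Sum>r<n. \<Sum>s<n. U s j * A s r * U r i)"
    using assms by (intro sum.cong refl) (auto simp: mult_ac)
  also have "\<dots> = orth_conj n U A j i"
    unfolding orth_conj_def by (simp add: sum_distrib_right)
  finally show ?thesis .
qed

lemma orth_conj_eigencolumn:
  assumes sym: "\<forall>i<n. \<forall>j<n. A i j = A j i" and U: "orthogonal_fun n U"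
    and ev: "\<forall>r<n. (\<Sum>s<n. A r s * U s i) = \<nu> * U r i" and ij: "i < n" "j < n"
  shows "orth_conj n U A i j = (if i = j then \<nu> else 0)"
proof -
  have "orth_conj n U A i j = (\<Sum>s<n. \<nu> * U s i * U s j)"
    unfolding orth_conj_def
  proof (intro sum.cong refl)
    fix s assume s: "s \<in> {..<n}"
    have "(\<Sum>r<n. U r i * A r s) = (\<Sum>r<n. A s r * U r i)"
      using sym s by (intro sum.cong refl) (auto simp: mult.commute)
    then show "(\<Sum>r<n. U r i * A r s) * U s j = \<nu> * U s i * U s j"
      using ev s by simp
  qed
  also have "\<dots> = (if i = j then \<nu> else 0)"
    using orthogonal_funD(1)[OF U ij] by (simp add: sum_distrib_left[symmetric] mult.assoc)
  finally show ?thesis .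
qed

lemma orth_conj_back:
  assumes U: "orthogonal_fun n U" and r: "r < n"
  shows "(\<Sum>p<n. U r p * orth_conj n U A p l) = (\<Sum>s<n. A r s * U s l)"
proof -
  have "(\<Sum>p<n. U r p * orth_conj n U A p l) = (\<Sum>p<n. \<Sum>s<n. \<Sum>q<n. U r p * U q p * (A q s * U s l))"
    unfolding orth_conj_def by (simp add: sum_distrib_left sum_distrib_right mult_ac)
  also have "\<dots> = (\<Sum>s<n. \<Sum>q<n. \<Sum>p<n. U r p * U q p * (A q s * U s l))"
    by (subst sum.swap) (intro sum.cong refl sum.swap)
  also have "\<dots> = (\<Sum>s<n. \<Sum>q<n. (\<Sum>p<n. U r p * U q p) * (A q s * U s l))"
    by (simp add: sum_distrib_right)
  also have "\<dots> = (\<Sum>s<n. \<Sum>q<n. (A q s * U s l) * (if r = q then 1 else 0))"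
    using U r by (intro sum.cong refl) (auto simp: orthogonal_funD)
  also have "\<dots> = (\<Sum>s<n. A r s * U s l)"
    using sum_mult_delta[OF r] by simp
  finally show ?thesis .
qed

text \<open>The eigenvector is one of the trailing (n - k) block, padded with k zeros.\<close>

lemma deflated_unit_eigenvector:
  fixes B :: "nat \<Rightarrow> nat \<Rightarrow> real" and n k :: nat
  assumes sym: "\<forall>i<n. \<forall>j<n. B i j = B j i" and k: "k < n"
    and deflated: "\<And>i j. i < k \<Longrightarrow> j < n \<Longrightarrow> j \<noteq> i \<Longrightarrow> B i j = 0"
  obtains lam z where "(\<Sum>i<n. (z i)\<^sup>2) = 1" "\<And>i. i < k \<Longrightarrow> z i = 0"
    "\<And>i. i < n \<Longrightarrow> (\<Sum>j<n. B i j * z j) = lam * z i"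
proof -
  define m where "m = n - k"
  define C where "C = mat m m (\<lambda>(i, j). B (i + k) (j + k))"
  have C: "C \<in> carrier_mat m m" "m > 0" "\<forall>i<m. \<forall>j<m. C $$ (i, j) = C $$ (j, i)"
    unfolding C_def m_def using sym k by auto
  obtain lam c where c: "(\<Sum>i<m. (c i)\<^sup>2) = 1"
    "\<And>i. i < m \<Longrightarrow> (\<Sum>j<m. C $$ (i, j) * c j) = lam * c i"
    using symmetric_unit_eigenvector[OF C] by metis
  define z where "z i = (if i < k then 0 else c (i - k))" for i
  have shift: "(\<Sum>i<n. g i * z i) = (\<Sum>i<m. g (i + k) * c i)" for g
  proof -
    have "(\<Sum>i<n. g i * z i) = (\<Sum>i\<in>{k..<n}. g i * z i)"
      by (rule sum.mono_neutral_right) (auto simp: z_def)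
    also have "\<dots> = (\<Sum>i\<in>{0 + k..<m + k}. g i * z i)"
      using k by (simp add: m_def)
    also have "\<dots> = (\<Sum>i\<in>{0..<m}. g (i + k) * z (i + k))"
      by (rule sum.shift_bounds_nat_ivl)
    also have "\<dots> = (\<Sum>i<m. g (i + k) * c i)"
      by (simp add: z_def atLeast0LessThan)
    finally show ?thesis .
  qed
  show ?thesis
  proof (rule that[of z lam])
    show "(\<Sum>i<n. (z i)\<^sup>2) = 1"
      using shift[of z] c(1) by (simp add: power2_eq_square z_def)
    show "z i = 0" if "i < k" for i
      using that by (simp add: z_def)
    show "(\<Sum>j<n. B i j * z j) = lam * z i" if i: "i < n" for i
    proof (cases "i < k")
      case True
      then show ?thesis
        using shift[of "B i"] deflated[OF True] k unfolding m_def z_def by (auto intro: sum.neutral)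
    next
      case False
      then have "(\<Sum>j<n. B i j * z j) = (\<Sum>j<m. C $$ (i - k, j) * c j)"
        using shift[of "B i"] i unfolding C_def m_def by (auto intro!: sum.cong)
      also have "\<dots> = lam * z i"
        using c(2)[of "i - k"] False i unfolding m_def z_def by auto
      finally show ?thesis .
    qed
  qed
qed

text \<open>In the basis U the matrix is block diagonal with a k x k diagonal leading block. An eigenvector z
  of the trailing block becomes column k after composing U with the reflection along z - e_k,
  which fixes the first k columns.\<close>

lemma orthogonal_eigenbasis_extend:
  fixes A :: "nat \<Rightarrow> nat \<Rightarrow> real"
  assumes sym: "\<forall>i<n. \<forall>j<n. A i j = A j i" and k: "k < n" and U: "orthogonal_fun n U"
    and ev: "\<forall>j<k. \<forall>r<n. (\<Sum>s<n. A r s * U s j) = \<nu> j * U r j"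
  shows "\<exists>U' \<nu>'. orthogonal_fun n U' \<and> (\<forall>j<Suc k. \<forall>r<n. (\<Sum>s<n. A r s * U' s j) = \<nu>' j * U' r j)"
proof -
  define B where "B = orth_conj n U A"
  have B_sym: "\<forall>i<n. \<forall>j<n. B i j = B j i"
    unfolding B_def using orth_conj_symmetric[OF sym] by blast
  have B_deflated: "B i j = 0" if "i < k" "j < n" "j \<noteq> i" for i j
  proof -
    have "\<forall>r<n. (\<Sum>s<n. A r s * U s i) = \<nu> i * U r i" "i < n"
      using ev that(1) k by auto
    from orth_conj_eigencolumn[OF sym U this that(2)] show ?thesis
      using that(3) unfolding B_def by simp
  qed
  obtain lam z where z: "(\<Sum>i<n. (z i)\<^sup>2) = 1" "\<And>i. i < k \<Longrightarrow> z i = 0"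
    "\<And>i. i < n \<Longrightarrow> (\<Sum>j<n. B i j * z j) = lam * z i"
    by (rule deflated_unit_eigenvector[OF B_sym k B_deflated]) auto
  define V where "V = householder n (\<lambda>l. z l - (if l = k then 1 else 0))"
  define U' where "U' r j = (\<Sum>l<n. U r l * V l j)" for r j
  have "orthogonal_fun n U'"
    unfolding U'_def V_def using orthogonal_fun_mult[OF U orthogonal_fun_householder] by simp
  moreover have "(\<Sum>s<n. A r s * U' s j) = (\<nu>(k := lam)) j * U' r j" if j: "j < Suc k" and r: "r < n" for j r
  proof (cases "j < k")
    case True
    have "U' q j = U q j" if "q < n" for q
      using True k z(2)[OF True] sum_mult_delta'[of j n "U q"]
      unfolding U'_def V_def by (simp add: householder_col_unit)
    then show ?thesis
      using ev True r by simp
  next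
    case False
    then have jk: "j = k"
      using j by simp
    have U'k: "U' q k = (\<Sum>l<n. U q l * z l)" if "q < n" for q
      unfolding U'_def V_def using householder_reflects_unit[OF z(1) k] by simp
    have "(\<Sum>s<n. A r s * U' s k) = (\<Sum>s<n. \<Sum>l<n. A r s * U s l * z l)"
      using U'k by (simp add: sum_distrib_left mult_ac)
    also have "\<dots> = (\<Sum>l<n. (\<Sum>s<n. A r s * U s l) * z l)"
      by (subst sum.swap) (simp add: sum_distrib_right)
    also have "\<dots> = (\<Sum>l<n. \<Sum>p<n. U r p * B p l * z l)"
      unfolding B_def by (simp add: orth_conj_back[OF U r] sum_distrib_right[symmetric])
    also have "\<dots> = (\<Sum>p<n. U r p * (\<Sum>l<n. B p l * z l))"
      by (subst sum.swap) (simp add: sum_distrib_left mult_ac)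
    also have "\<dots> = lam * U' r k"
      using z(3) U'k[OF r] by (simp add: sum_distrib_left mult_ac)
    finally show ?thesis
      by (simp add: jk)
  qed
  ultimately show ?thesis
    by blast
qed

theorem symmetric_orthogonal_eigenbasis:
  fixes A :: "nat \<Rightarrow> nat \<Rightarrow> real"
  assumes sym: "\<forall>i<n. \<forall>j<n. A i j = A j i"
  obtains U \<nu> where "orthogonal_fun n U" "\<forall>j<n. \<forall>r<n. (\<Sum>s<n. A r s * U s j) = \<nu> j * U r j"
proof -
  have "\<exists>U \<nu>. orthogonal_fun n U \<and> (\<forall>j<k. \<forall>r<n. (\<Sum>s<n. A r s * U s j) = \<nu> j * U r j)"
    if "k \<le> n" for k
    using that
  proof (induction k)
    case 0
    then show ?case
      using orthogonal_fun_id by blast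
  next
    case (Suc k)
    then obtain U \<nu> where "orthogonal_fun n U" "\<forall>j<k. \<forall>r<n. (\<Sum>s<n. A r s * U s j) = \<nu> j * U r j"
      by auto
    moreover have "k < n"
      using Suc.prems by simp
    ultimately show ?case
      using orthogonal_eigenbasis_extend[OF sym] by blast
  qed
  then show ?thesis
    using that by blast
qed

section \<open>Matrices with a prescribed orthonormal eigenbasis\<close>

lemma index_mult_mat_sum:
  fixes A B :: "'a::comm_ring_1 mat"
  assumes "A \<in> carrier_mat n m" "B \<in> carrier_mat m p" "i < n" "j < p"
  shows "(A * B) $$ (i, j) = (\<Sum>k<m. A $$ (i, k) * B $$ (k, j))"
  using assms by (auto simp: scalar_prod_def atLeast0LessThan intro!: sum.cong)

definition mat_of_fun :: "nat \<Rightarrow> (nat \<Rightarrow> nat \<Rightarrow> real) \<Rightarrow> real mat" where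
  "mat_of_fun n U = mat n n (\<lambda>(i, j). U i j)"

lemma mat_of_fun_carrier [simp]: "mat_of_fun n U \<in> carrier_mat n n"
  and dim_mat_of_fun [simp]: "dim_row (mat_of_fun n U) = n" "dim_col (mat_of_fun n U) = n"
  by (simp_all add: mat_of_fun_def)

lemma mat_of_fun_orthogonal:
  assumes U: "orthogonal_fun n U"
  shows "mat_of_fun n U * transpose_mat (mat_of_fun n U) = 1\<^sub>m n"
    and "transpose_mat (mat_of_fun n U) * mat_of_fun n U = 1\<^sub>m n"
proof -
  let ?P = "mat_of_fun n U"
  have "(?P * ?P\<^sup>T) $$ (i, j) = 1\<^sub>m n $$ (i, j)" if "i < n" "j < n" for i j
    using that by (subst index_mult_mat_sum[of _ n n]) (auto simp: mat_of_fun_def orthogonal_funD[OF U])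
  moreover have "(?P\<^sup>T * ?P) $$ (i, j) = 1\<^sub>m n $$ (i, j)" if "i < n" "j < n" for i j
    using that by (subst index_mult_mat_sum[of _ n n]) (auto simp: mat_of_fun_def orthogonal_funD[OF U])
  ultimately show "?P * ?P\<^sup>T = 1\<^sub>m n" "?P\<^sup>T * ?P = 1\<^sub>m n"
    by (auto intro!: eq_matI)
qed

definition spectral_mat :: "nat \<Rightarrow> (nat \<Rightarrow> nat \<Rightarrow> real) \<Rightarrow> (nat \<Rightarrow> real) \<Rightarrow> real mat" where
  "spectral_mat n U f = mat_of_fun n U * mat_diag n f * transpose_mat (mat_of_fun n U)"

lemma spectral_mat_carrier [simp]: "spectral_mat n U f \<in> carrier_mat n n"
  unfolding spectral_mat_def by (meson mat_of_fun_carrier mat_diag_dim mult_carrier_mat transpose_carrier_mat)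

lemma dim_spectral_mat [simp]:
  "dim_row (spectral_mat n U f) = n" "dim_col (spectral_mat n U f) = n"
  using spectral_mat_carrier by blast+

lemma spectral_mat_index:
  assumes "r < n" "t < n"
  shows "spectral_mat n U f $$ (r, t) = (\<Sum>k<n. U r k * f k * U t k)"
proof -
  have "mat_of_fun n U * mat_diag n f = mat n n (\<lambda>(i, k). U i k * f k)"
    by (subst mat_diag_mult_right[of _ n n]) (auto simp: mat_of_fun_def intro!: eq_matI)
  then show ?thesis
    using assms unfolding spectral_mat_def
    by (subst index_mult_mat_sum[of _ n n]) (auto simp: mat_of_fun_def)
qed

lemma spectral_mat_mult:
  assumes U: "orthogonal_fun n U"
  shows "spectral_mat n U f * spectral_mat n U g = spectral_mat n U (\<lambda>k. f k * g k)"
proof (rule eq_matI)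
  fix r t assume "r < dim_row (spectral_mat n U (\<lambda>k. f k * g k))"
    "t < dim_col (spectral_mat n U (\<lambda>k. f k * g k))"
  then have rt: "r < n" "t < n"
    by auto
  have "(spectral_mat n U f * spectral_mat n U g) $$ (r, t)
      = (\<Sum>l<n. (\<Sum>k<n. U l k * (U r k * f k)) * (\<Sum>p<n. U l p * (g p * U t p)))"
    using rt by (subst index_mult_mat_sum[of _ n n]) (simp_all add: spectral_mat_index mult_ac)
  also have "\<dots> = (\<Sum>k<n. \<Sum>p<n. U r k * f k * (g p * U t p) * (\<Sum>l<n. U l k * U l p))"
    by (rule sum_product_swap)
  also have "\<dots> = (\<Sum>k<n. U r k * (f k * g k) * U t k)"
    using U by (simp add: orthogonal_funD sum_mult_delta) (simp add: mult_ac)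
  finally show "(spectral_mat n U f * spectral_mat n U g) $$ (r, t)
      = spectral_mat n U (\<lambda>k. f k * g k) $$ (r, t)"
    using rt by (simp add: spectral_mat_index)
qed auto

lemma spectral_mat_one:
  assumes "orthogonal_fun n U"
  shows "spectral_mat n U (\<lambda>k. 1) = 1\<^sub>m n"
  unfolding spectral_mat_def using mat_of_fun_orthogonal(1)[OF assms] by simp

lemma spectral_mat_add: "spectral_mat n U f + spectral_mat n U g = spectral_mat n U (\<lambda>k. f k + g k)"
  by (rule eq_matI) (auto simp: spectral_mat_index sum.distrib algebra_simps)

lemma spectral_mat_diff: "spectral_mat n U f - spectral_mat n U g = spectral_mat n U (\<lambda>k. f k - g k)"
  by (rule eq_matI) (auto simp: spectral_mat_index sum_subtractf algebra_simps)

lemma spectral_mat_smult: "a \<cdot>\<^sub>m spectral_mat n U f = spectral_mat n U (\<lambda>k. a * f k)"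
  by (rule eq_matI) (auto simp: spectral_mat_index sum_distrib_left mult_ac)

lemma spectral_mat_cong: "(\<And>k. k < n \<Longrightarrow> f k = g k) \<Longrightarrow> spectral_mat n U f = spectral_mat n U g"
  by (rule eq_matI) (auto simp: spectral_mat_index intro!: sum.cong)

lemma the_mat_inverse_spectral_mat:
  assumes U: "orthogonal_fun n U" and f: "\<And>k. k < n \<Longrightarrow> f k \<noteq> 0"
  shows "the (mat_inverse (spectral_mat n U f)) = spectral_mat n U (\<lambda>k. 1 / f k)"
proof -
  define A where "A = spectral_mat n U f"
  define G where "G = spectral_mat n U (\<lambda>k. 1 / f k)"
  have "G * A = spectral_mat n U (\<lambda>k. 1)" "A * G = spectral_mat n U (\<lambda>k. 1)"
    unfolding A_def G_def spectral_mat_mult[OF U] using f by (auto intro: spectral_mat_cong)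
  then have GA: "G * A = 1\<^sub>m n" and AG: "A * G = 1\<^sub>m n"
    using spectral_mat_one[OF U] by auto
  have A: "A \<in> carrier_mat n n" and G: "G \<in> carrier_mat n n"
    unfolding A_def G_def by simp_all
  have "A \<in> Units (ring_mat TYPE(real) n ())"
    unfolding Units_def ring_mat_def using A G GA AG by auto
  then obtain H where H: "mat_inverse A = Some H"
    using mat_inverse(1)[OF A, where b="()"] by fastforce
  then have AH: "A * H = 1\<^sub>m n" and H': "H \<in> carrier_mat n n"
    using mat_inverse(2)[OF A H] by auto
  have "H = G * A * H"
    using GA H' by simp
  also have "\<dots> = G * (A * H)"
    by (rule assoc_mult_mat[OF G A H'])
  also have "\<dots> = G"
    using AH G by simp
  finally show ?thesis
    unfolding A_def[symmetric] G_def[symmetric] H by simp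
qed

lemma spectral_mat_col_norm:
  assumes U: "orthogonal_fun n U" and j: "j < n"
  shows "(\<Sum>i<n. (spectral_mat n U f $$ (i, j))\<^sup>2) = (\<Sum>k<n. (U j k)\<^sup>2 * (f k)\<^sup>2)"
proof -
  have "(\<Sum>i<n. (spectral_mat n U f $$ (i, j))\<^sup>2)
      = (spectral_mat n U f * spectral_mat n U f) $$ (j, j)"
    using j by (subst index_mult_mat_sum[of _ n n])
      (auto simp: power2_eq_square spectral_mat_index mult_ac intro!: sum.cong)
  also have "\<dots> = (\<Sum>k<n. (U j k)\<^sup>2 * (f k)\<^sup>2)"
    using j by (simp add: spectral_mat_mult[OF U] spectral_mat_index power2_eq_square mult_ac)
  finally show ?thesis .
qed

lemma spectral_mat_eigencolumn:
  assumes U: "orthogonal_fun n U" and "r < n" "k < n"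
  shows "(\<Sum>s<n. spectral_mat n U f $$ (r, s) * U s k) = f k * U r k"
proof -
  have "(\<Sum>s<n. spectral_mat n U f $$ (r, s) * U s k) = (\<Sum>s<n. \<Sum>l<n. U r l * f l * (U s l * U s k))"
    using assms(2) by (simp add: spectral_mat_index sum_distrib_right sum_distrib_left mult_ac)
  also have "\<dots> = (\<Sum>l<n. U r l * f l * (\<Sum>s<n. U s l * U s k))"
    by (subst sum.swap) (simp add: sum_distrib_left)
  also have "\<dots> = f k * U r k"
    using assms by (simp add: orthogonal_funD sum_mult_delta')
  finally show ?thesis .
qed

lemma eigenbasis_spectral_mat:
  fixes L :: "real mat"
  assumes L: "L \<in> carrier_mat n n" and U: "orthogonal_fun n U"
    and ev: "\<forall>j<n. \<forall>r<n. (\<Sum>s<n. L $$ (r, s) * U s j) = \<nu> j * U r j"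
  shows "L = spectral_mat n U \<nu>"
proof (rule eq_matI)
  fix r t assume "r < dim_row (spectral_mat n U \<nu>)" "t < dim_col (spectral_mat n U \<nu>)"
  then have rt: "r < n" "t < n"
    by auto
  have "spectral_mat n U \<nu> $$ (r, t) = (\<Sum>k<n. (\<Sum>s<n. L $$ (r, s) * U s k) * U t k)"
    using ev rt by (simp add: spectral_mat_index mult_ac)
  also have "\<dots> = (\<Sum>s<n. L $$ (r, s) * (\<Sum>k<n. U s k * U t k))"
    by (simp add: sum_distrib_right sum_distrib_left mult_ac) (rule sum.swap)
  also have "\<dots> = L $$ (r, t)"
    using U rt by (simp add: orthogonal_funD sum_mult_delta')
  finally show "L $$ (r, t) = spectral_mat n U \<nu> $$ (r, t)"
    by simp
qed (use L in auto)

lemma proots_prod_linear_factors: "proots (\<Prod>a\<leftarrow>xs. [:- a, 1:]) = mset (xs :: real list)"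
proof (induction xs)
  case (Cons a xs)
  have "(\<Prod>a\<leftarrow>xs. [:- a, 1:]) \<noteq> (0 :: real poly)"
    by (subst prod_list_zero_iff) auto
  then have "proots (\<Prod>a\<leftarrow>a # xs. [:- a, 1:]) = proots [:- a, 1:] + proots (\<Prod>a\<leftarrow>xs. [:- a, 1:])"
    by (simp only: list.map prod_list.Cons) (rule proots_mult; simp)
  then show ?case
    using Cons by (simp add: proots_linear_factor)
qed simp

lemma eigs_spectral_mat:
  assumes U: "orthogonal_fun n U"
  shows "eigs (spectral_mat n U f) = sort (map f [0..<n])"
proof -
  define P where "P = mat_of_fun n U"
  have "similar_mat_wit (spectral_mat n U f) (mat_diag n f) P (transpose_mat P)"
    unfolding similar_mat_wit_def P_def spectral_mat_def Let_def
    using mat_of_fun_orthogonal[OF U] by auto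
  then have "char_poly (spectral_mat n U f) = char_poly (mat_diag n f)"
    by (intro char_poly_similar) (auto simp: similar_mat_def)
  also have "\<dots> = (\<Prod>a\<leftarrow>map f [0..<n]. [:- a, 1:])"
  proof -
    have "diag_mat (mat_diag n f) = map f [0..<n]"
      unfolding diag_mat_def mat_diag_def by auto
    then show ?thesis
      by (subst char_poly_upper_triangular[of _ n]) (auto simp: upper_triangular_def mat_diag_def)
  qed
  finally have "char_poly (spectral_mat n U f) = (\<Prod>a\<leftarrow>map f [0..<n]. [:- a, 1:])" .
  then show ?thesis
    unfolding eigs_def by (simp only: proots_prod_linear_factors sorted_list_of_multiset_mset)
qed

lemma spectral_mat_permute:
  assumes U: "orthogonal_fun n U" and p: "bij_betw p {..<n} {..<n}"
  shows "orthogonal_fun n (\<lambda>r i. U r (p i))"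
    and "spectral_mat n (\<lambda>r i. U r (p i)) (\<lambda>i. f (p i)) = spectral_mat n U f"
proof -
  have p_lt: "p i < n" if "i < n" for i
    using p that by (auto dest: bij_betwE)
  have p_eq: "p i = p j \<longleftrightarrow> i = j" if "i < n" "j < n" for i j
    using p that unfolding bij_betw_def inj_on_def by auto
  have reindex: "(\<Sum>k<n. g (p k)) = (\<Sum>k<n. g k)" for g :: "nat \<Rightarrow> real"
    using sum.reindex_bij_betw[OF p] .
  show "orthogonal_fun n (\<lambda>r i. U r (p i))"
    unfolding orthogonal_fun_def using orthogonal_funD[OF U] p_lt p_eq
    by (simp add: reindex[of "\<lambda>k. U _ k * U _ k"])
  show "spectral_mat n (\<lambda>r i. U r (p i)) (\<lambda>i. f (p i)) = spectral_mat n U f"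
    by (rule eq_matI) (auto simp: spectral_mat_index reindex[of "\<lambda>k. U _ k * f k * U _ k"])
qed

theorem symmetric_spectral_decomposition:
  fixes L :: "real mat"
  assumes L: "L \<in> carrier_mat n n" and sym: "\<forall>i<n. \<forall>j<n. L $$ (i, j) = L $$ (j, i)"
  obtains U where "orthogonal_fun n U" "L = spectral_mat n U (\<lambda>k. eigs L ! k)" "length (eigs L) = n"
proof -
  obtain U \<nu> where U: "orthogonal_fun n U" and "\<forall>j<n. \<forall>r<n. (\<Sum>s<n. L $$ (r, s) * U s j) = \<nu> j * U r j"
    using symmetric_orthogonal_eigenbasis[of n "\<lambda>i j. L $$ (i, j)"] sym by blast
  then have L_eq: "L = spectral_mat n U \<nu>"
    using eigenbasis_spectral_mat[OF L] by blast
  define xs where "xs = map \<nu> [0..<n]"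
  have eigs_L: "eigs L = sort xs"
    unfolding L_eq xs_def by (rule eigs_spectral_mat[OF U])
  obtain p where p: "bij_betw p {..<n} {..<n}" "\<And>i. i < n \<Longrightarrow> sort xs ! i = xs ! p i"
    using permutation_Ex_bij[of "sort xs" xs] unfolding xs_def by auto
  have eigs_p: "eigs L ! i = \<nu> (p i)" if "i < n" for i
    using p that unfolding eigs_L xs_def by (auto dest: bij_betwE)
  show ?thesis
  proof (rule that)
    show "orthogonal_fun n (\<lambda>r i. U r (p i))"
      by (rule spectral_mat_permute(1)[OF U p(1)])
    have "spectral_mat n (\<lambda>r i. U r (p i)) (\<lambda>k. eigs L ! k) = spectral_mat n (\<lambda>r i. U r (p i)) (\<lambda>i. \<nu> (p i))"
      using eigs_p by (rule spectral_mat_cong)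
    then show "L = spectral_mat n (\<lambda>r i. U r (p i)) (\<lambda>k. eigs L ! k)"
      using spectral_mat_permute(2)[OF U p(1)] L_eq by simp
    show "length (eigs L) = n"
      by (simp add: eigs_L xs_def)
  qed
qed

section \<open>Filtering in a sorted eigenbasis\<close>

text \<open>Since 1 / 0 = 0, the bound reads x / (1 + x) \<le> 1 for y = 0.\<close>

lemma shrinkage_le:
  fixes x y :: real
  assumes "0 \<le> x" "x \<le> y"
  shows "x / (1 + x) \<le> 1 / (1 + 1 / y)"
proof (cases "y = 0")
  case False
  then have "x * (1 + y) \<le> y * (1 + x)"
    using assms by (simp add: algebra_simps)
  then show ?thesis
    using assms False by (simp add: field_simps)
qed (use assms in simp)

text \<open>The column sums of U are the coordinates of the all-ones vector in this basis, so the
  last assumption says that the all-ones vector lies in the kernel.\<close>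

locale sorted_psd_spectrum =
  fixes n :: nat and U :: "nat \<Rightarrow> nat \<Rightarrow> real" and \<nu> :: "nat \<Rightarrow> real"
  assumes orthogonal: "orthogonal_fun n U"
    and nonneg: "\<And>k. k < n \<Longrightarrow> 0 \<le> \<nu> k"
    and sorted: "\<And>i j. i \<le> j \<Longrightarrow> j < n \<Longrightarrow> \<nu> i \<le> \<nu> j"
    and ones_in_kernel: "\<And>k. k < n \<Longrightarrow> \<nu> k * (\<Sum>i<n. U i k) = 0"
begin

lemma ones_coords: "j < n \<Longrightarrow> (\<Sum>k<n. U j k * (\<Sum>i<n. U i k)) = 1"
proof -
  assume j: "j < n"
  have "(\<Sum>k<n. U j k * (\<Sum>i<n. U i k)) = (\<Sum>i<n. \<Sum>k<n. U j k * U i k)"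
    by (simp add: sum_distrib_left) (rule sum.swap)
  also have "\<dots> = 1"
    using j by (simp add: orthogonal_funD(2)[OF orthogonal])
  finally show ?thesis .
qed

lemma ones_coords_norm: "(\<Sum>k<n. (\<Sum>i<n. U i k)\<^sup>2) = real n"
proof -
  have "(\<Sum>k<n. (\<Sum>i<n. U i k)\<^sup>2) = (\<Sum>k<n. (\<Sum>i<n. U i k * 1) * (\<Sum>p<n. U p k * 1))"
    by (simp add: power2_eq_square)
  also have "\<dots> = (\<Sum>i<n. \<Sum>p<n. 1 * 1 * (\<Sum>k<n. U i k * U p k))"
    by (rule sum_product_swap)
  also have "\<dots> = real n"
    by (simp add: orthogonal_funD(2)[OF orthogonal])
  finally show ?thesis .
qed

definition smoother :: "real \<Rightarrow> real mat" where
  "smoother \<alpha> = spectral_mat n U (\<lambda>k. 1 / (1 + \<alpha> * \<nu> k))"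

lemma the_mat_inverse_eq_smoother:
  assumes "\<alpha> > 0"
  shows "the (mat_inverse (1\<^sub>m n + \<alpha> \<cdot>\<^sub>m spectral_mat n U \<nu>)) = smoother \<alpha>"
proof -
  have "1\<^sub>m n + \<alpha> \<cdot>\<^sub>m spectral_mat n U \<nu> = spectral_mat n U (\<lambda>k. 1 + \<alpha> * \<nu> k)"
    unfolding spectral_mat_one[OF orthogonal, symmetric] spectral_mat_smult spectral_mat_add ..
  moreover have "1 + \<alpha> * \<nu> k \<noteq> 0" if "k < n" for k
    using nonneg[OF that] assms by (smt (verit) mult_nonneg_nonneg)
  ultimately show ?thesis
    unfolding smoother_def by (simp add: the_mat_inverse_spectral_mat[OF orthogonal])
qed

lemma smoother_row_sum:
  assumes "i < n"
  shows "(\<Sum>j<n. smoother \<alpha> $$ (i, j)) = 1"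
proof -
  have fixes_ones: "1 / (1 + \<alpha> * \<nu> k) * (\<Sum>j<n. U j k) = (\<Sum>j<n. U j k)" if "k < n" for k
    using ones_in_kernel[OF that] by (cases "\<nu> k = 0") auto
  have "(\<Sum>j<n. smoother \<alpha> $$ (i, j)) = (\<Sum>j<n. \<Sum>k<n. U i k * (1 / (1 + \<alpha> * \<nu> k) * U j k))"
    unfolding smoother_def using assms by (simp add: spectral_mat_index mult_ac)
  also have "\<dots> = (\<Sum>k<n. U i k * (1 / (1 + \<alpha> * \<nu> k) * (\<Sum>j<n. U j k)))"
    by (subst sum.swap) (simp add: sum_distrib_left)
  also have "\<dots> = 1"
    using fixes_ones ones_coords[OF assms] by simp
  finally show ?thesis .
qed

text \<open>The kernel contains the unit vector 1/sqrt n, so the projection of every standard basis vector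
  onto the kernel has squared norm at least 1/n.\<close>

lemma kernel_mass:
  assumes j: "j < n"
  shows "1 / real n \<le> (\<Sum>k<n. if \<nu> k = 0 then (U j k)\<^sup>2 else 0)"
proof -
  define z where "z k = (if \<nu> k = 0 then 1 else (0::real))" for k
  define a where "a k = (\<Sum>i<n. U i k)" for k
  have za: "z k * a k = a k" if "k < n" for k
    using ones_in_kernel[OF that] unfolding a_def z_def by auto
  have "(\<Sum>k<n. U j k * (z k * a k)) = (\<Sum>k<n. U j k * a k)"
    by (rule sum.cong) (simp_all add: za)
  then have ones: "(\<Sum>k<n. U j k * (z k * a k)) = 1"
    using ones_coords[OF j] unfolding a_def by simp
  have "(\<Sum>k<n. z k * a k * a k) = (\<Sum>k<n. (a k)\<^sup>2)"
    by (rule sum.cong) (simp_all add: za power2_eq_square)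
  then have norm: "(\<Sum>k<n. z k * a k * a k) = n"
    using ones_coords_norm unfolding a_def by simp
  have "0 \<le> (\<Sum>k<n. z k * (U j k - a k / n)\<^sup>2)"
    unfolding z_def by (intro sum_nonneg) auto
  also have "\<dots> = (\<Sum>k<n. z k * (U j k)\<^sup>2) - 2 / n * (\<Sum>k<n. U j k * (z k * a k))
      + 1 / n\<^sup>2 * (\<Sum>k<n. z k * a k * a k)"
    by (simp add: power2_diff algebra_simps sum.distrib sum_subtractf sum_distrib_left
        sum_divide_distrib power_divide power2_eq_square)
  also have "\<dots> = (\<Sum>k<n. z k * (U j k)\<^sup>2) - 1 / n"
    using j by (simp add: ones norm power2_eq_square)
  finally show ?thesis
    by (simp add: z_def if_distrib[of "\<lambda>c. c * _"] cong: if_cong)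
qed

lemma smoother_response_le_one:
  assumes "\<alpha> > 0" "k < n"
  shows "0 \<le> 1 / (1 + \<alpha> * \<nu> k)" "1 / (1 + \<alpha> * \<nu> k) \<le> 1"
  using nonneg[OF assms(2)] assms(1) by (auto simp: field_simps add_pos_nonneg)

lemma smoother_bias_col_norm:
  assumes \<alpha>: "\<alpha> > 0" and j: "j < n"
  shows "(\<Sum>i<n. (smoother \<alpha> $$ (i, j) - (if i = j then 1 else 0))\<^sup>2)
    \<le> (1 / (1 + 1 / (\<alpha> * \<nu> (n - 1))))\<^sup>2 * (1 - 1 / real n)"
proof -
  define C where "C = 1 / (1 + 1 / (\<alpha> * \<nu> (n - 1)))"
  define K where "K = (\<Sum>k<n. if \<nu> k = 0 then (U j k)\<^sup>2 else 0)"
  have bias: "smoother \<alpha> - 1\<^sub>m n = spectral_mat n U (\<lambda>k. 1 / (1 + \<alpha> * \<nu> k) - 1)"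
    unfolding smoother_def spectral_mat_one[OF orthogonal, symmetric] spectral_mat_diff ..
  have "(\<Sum>i<n. (smoother \<alpha> $$ (i, j) - (if i = j then 1 else 0))\<^sup>2)
      = (\<Sum>i<n. ((smoother \<alpha> - 1\<^sub>m n) $$ (i, j))\<^sup>2)"
    using j by (intro sum.cong refl) (simp add: smoother_def)
  also have "\<dots> = (\<Sum>k<n. (U j k)\<^sup>2 * (1 / (1 + \<alpha> * \<nu> k) - 1)\<^sup>2)"
    unfolding bias by (rule spectral_mat_col_norm[OF orthogonal j])
  also have "\<dots> \<le> (\<Sum>k<n. C\<^sup>2 * (U j k)\<^sup>2 - C\<^sup>2 * (if \<nu> k = 0 then (U j k)\<^sup>2 else 0))"
  proof (rule sum_mono)
    fix k assume k: "k \<in> {..<n}"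
    have "1 + \<alpha> * \<nu> k > 0"
      using nonneg[of k] k \<alpha> by (simp add: add_pos_nonneg)
    then have "1 / (1 + \<alpha> * \<nu> k) - 1 = - (\<alpha> * \<nu> k / (1 + \<alpha> * \<nu> k))"
      by (simp add: field_simps)
    moreover have "\<alpha> * \<nu> k / (1 + \<alpha> * \<nu> k) \<le> C"
      unfolding C_def using nonneg[of k] sorted[of k "n - 1"] k \<alpha>
      by (intro shrinkage_le) auto
    ultimately have "(1 / (1 + \<alpha> * \<nu> k) - 1)\<^sup>2 \<le> C\<^sup>2"
      using nonneg[of k] k \<alpha> by (simp add: power_mono)
    then show "(U j k)\<^sup>2 * (1 / (1 + \<alpha> * \<nu> k) - 1)\<^sup>2
        \<le> C\<^sup>2 * (U j k)\<^sup>2 - C\<^sup>2 * (if \<nu> k = 0 then (U j k)\<^sup>2 else 0)"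
      by (cases "\<nu> k = 0") (simp_all add: mult.commute[of "C\<^sup>2"] mult_left_mono)
  qed
  also have "\<dots> = C\<^sup>2 * (1 - K)"
    using orthogonal_funD(2)[OF orthogonal j j]
    by (simp add: K_def sum_subtractf sum_distrib_left[symmetric] power2_eq_square algebra_simps)
  also have "\<dots> \<le> C\<^sup>2 * (1 - 1 / real n)"
    using kernel_mass[OF j] unfolding K_def by (intro mult_left_mono) auto
  finally show ?thesis
    unfolding C_def .
qed

lemma first_eigenvector_coord:
  assumes pos: "\<nu> 1 > 0" and n: "1 < n" and j: "j < n"
  shows "(U j 0)\<^sup>2 = 1 / real n"
proof -
  define a where "a k = (\<Sum>i<n. U i k)" for k
  have a_zero: "a k = 0" if "1 \<le> k" "k < n" for k
    using ones_in_kernel[OF that(2)] sorted[OF that] pos unfolding a_def by auto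
  have split: "(\<Sum>k<n. g k) = g 0" if "\<And>k. 1 \<le> k \<Longrightarrow> k < n \<Longrightarrow> g k = 0" for g :: "nat \<Rightarrow> real"
    using n that by (subst sum.remove[of _ 0]) (auto intro!: sum.neutral)
  have "U j 0 * a 0 = 1"
    using ones_coords[OF j] split[of "\<lambda>k. U j k * a k"] a_zero unfolding a_def by simp
  moreover have "(a 0)\<^sup>2 = real n"
    using ones_coords_norm split[of "\<lambda>k. (a k)\<^sup>2"] a_zero unfolding a_def by simp
  ultimately have "(U j 0)\<^sup>2 * real n = 1"
    by (metis power_mult_distrib power_one)
  then show ?thesis
    using n by (simp add: field_simps)
qed

lemma smoother_response_sq_le:
  assumes \<alpha>: "\<alpha> > 0" and k: "k < n"
  shows "(1 / (1 + \<alpha> * \<nu> k))\<^sup>2 \<le> (if k = 0 then 1 else (1 / (1 + \<alpha> * \<nu> 1))\<^sup>2)"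
proof (cases "k = 0")
  case True
  then show ?thesis
    using smoother_response_le_one[OF \<alpha> k] by (simp add: power_le_one)
next
  case False
  then have "1 / (1 + \<alpha> * \<nu> k) \<le> 1 / (1 + \<alpha> * \<nu> 1)"
    using sorted[of 1 k] nonneg[of 1] k \<alpha> by (intro frac_le) (auto simp: add_pos_nonneg)
  then show ?thesis
    using False smoother_response_le_one[OF \<alpha> k] by (simp add: power_mono)
qed

lemma smoother_variance_col_norm:
  assumes \<alpha>: "\<alpha> > 0" and n: "1 < n" and j: "j < n"
  shows "(\<Sum>i<n. (smoother \<alpha> $$ (i, j))\<^sup>2) \<le> 1 / real n + (1 / (1 + \<alpha> * \<nu> 1))\<^sup>2 * (1 - 1 / real n)"
proof -
  define d where "d = (1 / (1 + \<alpha> * \<nu> 1))\<^sup>2"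
  have "(\<Sum>i<n. (smoother \<alpha> $$ (i, j))\<^sup>2) = (\<Sum>k<n. (U j k)\<^sup>2 * (1 / (1 + \<alpha> * \<nu> k))\<^sup>2)"
    unfolding smoother_def by (rule spectral_mat_col_norm[OF orthogonal j])
  also have "\<dots> \<le> (\<Sum>k<n. (U j k)\<^sup>2 * (if k = 0 then 1 else d))"
    using smoother_response_sq_le[OF \<alpha>] unfolding d_def by (intro sum_mono mult_left_mono) auto
  also have "\<dots> = (\<Sum>k<n. d * (U j k)\<^sup>2 + (if k = 0 then (1 - d) * (U j k)\<^sup>2 else 0))"
    by (intro sum.cong refl) (simp add: algebra_simps)
  also have "\<dots> = d + (1 - d) * (U j 0)\<^sup>2"
    using n orthogonal_funD(2)[OF orthogonal j j]
    by (simp add: sum.distrib sum_distrib_left[symmetric] sum.delta power2_eq_square)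
  also have "\<dots> \<le> 1 / real n + d * (1 - 1 / real n)"
  proof (cases "\<nu> 1 = 0")
    case True
    then show ?thesis
      unfolding d_def by simp
  next
    case False
    then have "\<nu> 1 > 0"
      using nonneg[of 1] n by simp
    then show ?thesis
      using first_eigenvector_coord[OF _ n j] n by (simp add: field_simps)
  qed
  finally show ?thesis
    unfolding d_def .
qed

end

section \<open>The graph Laplacian\<close>

lemma laplacian_carrier [simp]: "laplacian n W \<in> carrier_mat n n"
  unfolding laplacian_def by simp

lemma laplacian_index:
  "i < n \<Longrightarrow> j < n \<Longrightarrow>
   laplacian n W $$ (i, j) = (if i = j then (\<Sum>k<n. W $$ (i, k)) else 0) - W $$ (i, j)"
  unfolding laplacian_def by simp

lemma laplacian_symmetric:
  assumes "\<forall>i<n. \<forall>j<n. W $$ (i, j) = W $$ (j, i)"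
  shows "\<forall>i<n. \<forall>j<n. laplacian n W $$ (i, j) = laplacian n W $$ (j, i)"
  using assms by (auto simp: laplacian_index)

lemma laplacian_mult:
  assumes "r < n"
  shows "(\<Sum>s<n. laplacian n W $$ (r, s) * x s) = (\<Sum>s<n. W $$ (r, s)) * x r - (\<Sum>s<n. W $$ (r, s) * x s)"
proof -
  have "(\<Sum>s<n. laplacian n W $$ (r, s) * x s)
      = (\<Sum>s<n. ((\<Sum>k<n. W $$ (r, k)) * x s) * (if r = s then 1 else 0) - W $$ (r, s) * x s)"
    using assms by (intro sum.cong refl) (auto simp: laplacian_index algebra_simps)
  then show ?thesis
    using assms by (simp add: sum_subtractf sum_mult_delta)
qed

lemma laplacian_col_sum:
  assumes "\<forall>i<n. \<forall>j<n. W $$ (i, j) = W $$ (j, i)" "s < n"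
  shows "(\<Sum>r<n. laplacian n W $$ (r, s)) = 0"
  using laplacian_mult[OF assms(2), of W "\<lambda>_. 1"] laplacian_symmetric[OF assms(1)] assms(2) by simp

text \<open>The quadratic form of the Laplacian is half the weighted sum of squared differences.\<close>

lemma laplacian_quadratic_form_nonneg:
  assumes sym: "\<forall>i<n. \<forall>j<n. W $$ (i, j) = W $$ (j, i)"
    and nonneg: "\<forall>i<n. \<forall>j<n. W $$ (i, j) \<ge> 0"
  shows "(\<Sum>r<n. x r * (\<Sum>s<n. laplacian n W $$ (r, s) * x s)) \<ge> 0"
proof -
  define d where "d r = (\<Sum>s<n. W $$ (r, s))" for r
  have diag: "(\<Sum>r<n. \<Sum>s<n. W $$ (r, s) * (x r)\<^sup>2) = (\<Sum>r<n. d r * (x r)\<^sup>2)"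
    unfolding d_def by (simp add: sum_distrib_right)
  have diag': "(\<Sum>r<n. \<Sum>s<n. W $$ (r, s) * (x s)\<^sup>2) = (\<Sum>r<n. d r * (x r)\<^sup>2)"
    using sym diag by (subst sum.swap) (auto intro!: sum.cong)
  have "(\<Sum>r<n. x r * (\<Sum>s<n. laplacian n W $$ (r, s) * x s))
      = (\<Sum>r<n. x r * (d r * x r - (\<Sum>s<n. W $$ (r, s) * x s)))"
    unfolding d_def by (intro sum.cong refl) (simp add: laplacian_mult)
  also have "\<dots> = (\<Sum>r<n. d r * (x r)\<^sup>2) - (\<Sum>r<n. \<Sum>s<n. W $$ (r, s) * x r * x s)"
    by (simp add: sum_subtractf algebra_simps power2_eq_square sum_distrib_left)
  also have "\<dots> = (\<Sum>r<n. \<Sum>s<n. W $$ (r, s) * (x r - x s)\<^sup>2) / 2"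
    using diag diag' by (simp add: power2_diff algebra_simps sum.distrib sum_subtractf sum_distrib_left)
  also have "\<dots> \<ge> 0"
    using nonneg by (intro divide_nonneg_pos sum_nonneg) auto
  finally show ?thesis .
qed

lemma laplacian_sorted_psd_spectrum:
  assumes sym: "\<forall>i<n. \<forall>j<n. W $$ (i, j) = W $$ (j, i)"
    and nonneg: "\<forall>i<n. \<forall>j<n. W $$ (i, j) \<ge> 0"
  defines "lam \<equiv> \<lambda>k. eigs (laplacian n W) ! k"
  obtains U where "sorted_psd_spectrum n U lam" "laplacian n W = spectral_mat n U lam"
proof -
  obtain U where U: "orthogonal_fun n U" and L: "laplacian n W = spectral_mat n U lam"
    and len: "length (eigs (laplacian n W)) = n"
    using symmetric_spectral_decomposition[OF laplacian_carrier laplacian_symmetric[OF sym]]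
    unfolding lam_def by metis
  have ev: "(\<Sum>s<n. laplacian n W $$ (r, s) * U s k) = lam k * U r k" if "r < n" "k < n" for r k
    unfolding L using spectral_mat_eigencolumn[OF U that] .
  have "sorted_psd_spectrum n U lam"
  proof
    show "orthogonal_fun n U"
      by (fact U)
    show "lam i \<le> lam j" if "i \<le> j" "j < n" for i j
      unfolding lam_def using that len by (simp add: eigs_def sorted_nth_mono)
    fix k assume k: "k < n"
    have "lam k = (\<Sum>r<n. U r k * (lam k * U r k))"
      using orthogonal_funD(1)[OF U k k] by (simp add: sum_distrib_left[symmetric] mult_ac)
    also have "\<dots> = (\<Sum>r<n. U r k * (\<Sum>s<n. laplacian n W $$ (r, s) * U s k))"
      using ev k by simp
    also have "\<dots> \<ge> 0"
      by (rule laplacian_quadratic_form_nonneg[OF sym nonneg])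
    finally show "0 \<le> lam k" .
    have "lam k * (\<Sum>j<n. U j k) = (\<Sum>r<n. \<Sum>s<n. laplacian n W $$ (r, s) * U s k)"
      using ev k by (simp add: sum_distrib_left mult.commute)
    also have "\<dots> = (\<Sum>s<n. (\<Sum>r<n. laplacian n W $$ (r, s)) * U s k)"
      by (subst sum.swap) (simp add: sum_distrib_right)
    also have "\<dots> = 0"
      using laplacian_col_sum[OF sym] by simp
    finally show "lam k * (\<Sum>j<n. U j k) = 0" .
  qed
  then show ?thesis
    using that L by blast
qed

section \<open>Mean squared error of a linear smoother\<close>

lemma gaussian_centered_moments:
  fixes X :: "'w \<Rightarrow> real"
  assumes "prob_space M" and X: "X \<in> borel_measurable M"
    and D: "distr M borel X = gaussian \<mu> s" and s: "s \<ge> 0"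
  shows "integrable M (\<lambda>\<omega>. X \<omega> - \<mu>)" "integral\<^sup>L M (\<lambda>\<omega>. X \<omega> - \<mu>) = 0"
    "integrable M (\<lambda>\<omega>. (X \<omega> - \<mu>)\<^sup>2)" "integral\<^sup>L M (\<lambda>\<omega>. (X \<omega> - \<mu>)\<^sup>2) = s\<^sup>2"
proof -
  have "integrable M (\<lambda>\<omega>. (X \<omega> - \<mu>) ^ k) \<and> integral\<^sup>L M (\<lambda>\<omega>. (X \<omega> - \<mu>) ^ k) = (if k = 1 then 0 else s\<^sup>2)"
    if k: "k = 1 \<or> k = 2" for k
  proof (cases "s = 0")
    case True
    then have "AE x in distr M borel X. x = \<mu>"
      unfolding D gaussian_def by (simp add: AE_return)
    then have "AE \<omega> in M. X \<omega> = \<mu>"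
      using AE_distrD[OF X] by blast
    then have ae: "AE \<omega> in M. (X \<omega> - \<mu>) ^ k = 0"
      by eventually_elim (use k in auto)
    have "integrable M (\<lambda>\<omega>. (X \<omega> - \<mu>) ^ k) = integrable M (\<lambda>\<omega>. 0::real)"
      by (rule integrable_cong_AE) (use X ae in auto)
    moreover have "integral\<^sup>L M (\<lambda>\<omega>. (X \<omega> - \<mu>) ^ k) = integral\<^sup>L M (\<lambda>\<omega>. 0::real)"
      by (rule integral_cong_AE) (use X ae in auto)
    ultimately show ?thesis
      using True by simp
  next
    case False
    then have s_pos: "s > 0"
      using s by simp
    have "distr M lborel X = distr M borel X"
      unfolding distr_def by (simp add: sets_lborel space_lborel)
    then have dist: "distributed M lborel X (\<lambda>x. ennreal (normal_density \<mu> s x))"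
      unfolding distributed_def D gaussian_def using False X by (simp add: measurable_lborel1)
    have "integrable M (\<lambda>\<omega>. (X \<omega> - \<mu>) ^ k)"
      using distributed_integrable[OF dist, of "\<lambda>x. (x - \<mu>) ^ k"] integrable_normal_moment[OF s_pos]
      by simp
    moreover have "integral\<^sup>L M (\<lambda>\<omega>. (X \<omega> - \<mu>) ^ k) = (LINT x|lborel. normal_density \<mu> s x * (x - \<mu>) ^ k)"
      using distributed_integral[OF dist, of "\<lambda>x. (x - \<mu>) ^ k"] by simp
    ultimately show ?thesis
      using k integral_normal_moment_odd[OF s_pos, of \<mu> 0] integral_normal_moment_even[OF s_pos, of \<mu> 1]
      by auto
  qed
  from this[of 1] this[of 2] show
    "integrable M (\<lambda>\<omega>. X \<omega> - \<mu>)" "integral\<^sup>L M (\<lambda>\<omega>. X \<omega> - \<mu>) = 0"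
    "integrable M (\<lambda>\<omega>. (X \<omega> - \<mu>)\<^sup>2)" "integral\<^sup>L M (\<lambda>\<omega>. (X \<omega> - \<mu>)\<^sup>2) = s\<^sup>2"
    by auto
qed

lemma integrable_mult_square_integrable:
  fixes f g :: "'w \<Rightarrow> real"
  assumes "f \<in> borel_measurable M" "g \<in> borel_measurable M"
    "integrable M (\<lambda>\<omega>. (f \<omega>)\<^sup>2)" "integrable M (\<lambda>\<omega>. (g \<omega>)\<^sup>2)"
  shows "integrable M (\<lambda>\<omega>. f \<omega> * g \<omega>)"
proof (rule Bochner_Integration.integrable_bound)
  show "integrable M (\<lambda>\<omega>. (f \<omega>)\<^sup>2 + (g \<omega>)\<^sup>2)"
    using assms by auto
  show "(\<lambda>\<omega>. f \<omega> * g \<omega>) \<in> borel_measurable M"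
    using assms by auto
  have "2 * \<bar>f \<omega> * g \<omega>\<bar> \<le> (f \<omega>)\<^sup>2 + (g \<omega>)\<^sup>2" for \<omega>
    using sum_squares_bound[of "\<bar>f \<omega>\<bar>" "\<bar>g \<omega>\<bar>"] by (simp add: abs_mult power2_abs)
  then show "AE \<omega> in M. norm (f \<omega> * g \<omega>) \<le> norm ((f \<omega>)\<^sup>2 + (g \<omega>)\<^sup>2)"
    by (intro AE_I2) (smt (verit) real_norm_def zero_le_power2)
qed

definition uncorrelated_moments ::
    "'w measure \<Rightarrow> nat \<Rightarrow> (nat \<Rightarrow> 'w \<Rightarrow> real) \<Rightarrow> (nat \<Rightarrow> 'w \<Rightarrow> real) \<Rightarrow> (nat \<Rightarrow> real) \<Rightarrow> (nat \<Rightarrow> real) \<Rightarrow> bool"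
  where "uncorrelated_moments M n Z E v w \<longleftrightarrow> (\<forall>j<n. \<forall>k<n.
      integrable M (\<lambda>\<omega>. Z j \<omega> * Z k \<omega>) \<and> integrable M (\<lambda>\<omega>. Z j \<omega> * E k \<omega>) \<and>
      integrable M (\<lambda>\<omega>. E j \<omega> * E k \<omega>) \<and>
      integral\<^sup>L M (\<lambda>\<omega>. Z j \<omega> * Z k \<omega>) = (if j = k then v j else 0) \<and>
      integral\<^sup>L M (\<lambda>\<omega>. Z j \<omega> * E k \<omega>) = 0 \<and>
      integral\<^sup>L M (\<lambda>\<omega>. E j \<omega> * E k \<omega>) = (if j = k then w j else 0))"

lemma integral_square_lincomb:
  fixes a b :: "nat \<Rightarrow> real"
  assumes mom: "uncorrelated_moments M n Z E v w"
  defines "u \<equiv> \<lambda>\<omega>. \<Sum>j<n. a j * Z j \<omega> + b j * E j \<omega>"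
  shows "integrable M (\<lambda>\<omega>. (u \<omega>)\<^sup>2)"
    and "integral\<^sup>L M (\<lambda>\<omega>. (u \<omega>)\<^sup>2) = (\<Sum>j<n. (a j)\<^sup>2 * v j + (b j)\<^sup>2 * w j)"
proof -
  define t where "t j k \<omega> = a j * a k * (Z j \<omega> * Z k \<omega>) + a j * b k * (Z j \<omega> * E k \<omega>)
      + a k * b j * (Z k \<omega> * E j \<omega>) + b j * b k * (E j \<omega> * E k \<omega>)" for j k \<omega>
  have sq: "(u \<omega>)\<^sup>2 = (\<Sum>j<n. \<Sum>k<n. t j k \<omega>)" for \<omega>
    unfolding u_def t_def power2_eq_square sum_product by (intro sum.cong refl) (simp add: algebra_simps)
  have int: "integrable M (t j k)" if "j < n" "k < n" for j k
    using mom that unfolding uncorrelated_moments_def t_def by auto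
  have val: "integral\<^sup>L M (t j k) = (if j = k then (a j)\<^sup>2 * v j + (b j)\<^sup>2 * w j else 0)"
    if "j < n" "k < n" for j k
    using mom that unfolding uncorrelated_moments_def t_def by (simp add: power2_eq_square)
  have int_rows: "integrable M (\<lambda>\<omega>. \<Sum>k<n. t j k \<omega>)" if "j < n" for j
    using int that by (intro Bochner_Integration.integrable_sum) auto
  then show "integrable M (\<lambda>\<omega>. (u \<omega>)\<^sup>2)"
    unfolding sq by (rule Bochner_Integration.integrable_sum) auto
  have "integral\<^sup>L M (\<lambda>\<omega>. (u \<omega>)\<^sup>2) = (\<Sum>j<n. integral\<^sup>L M (\<lambda>\<omega>. \<Sum>k<n. t j k \<omega>))"
    unfolding sq using int_rows by (intro Bochner_Integration.integral_sum) auto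
  also have "\<dots> = (\<Sum>j<n. \<Sum>k<n. integral\<^sup>L M (t j k))"
    using int by (intro sum.cong refl Bochner_Integration.integral_sum) auto
  also have "\<dots> = (\<Sum>j<n. (a j)\<^sup>2 * v j + (b j)\<^sup>2 * w j)"
    using val by (simp add: sum.delta)
  finally show "integral\<^sup>L M (\<lambda>\<omega>. (u \<omega>)\<^sup>2) = (\<Sum>j<n. (a j)\<^sup>2 * v j + (b j)\<^sup>2 * w j)" .
qed

lemma mse_linear_smoother:
  fixes H :: "real mat" and X E :: "nat \<Rightarrow> 'w \<Rightarrow> real"
  assumes H: "H \<in> carrier_mat n n" and rows: "\<And>i. i < n \<Longrightarrow> (\<Sum>j<n. H $$ (i, j)) = 1"
    and mom: "uncorrelated_moments M n (\<lambda>j \<omega>. X j \<omega> - \<mu>) E v w"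
  shows "integral\<^sup>L M (\<lambda>\<omega>. \<Sum>i<n. ((H *\<^sub>v vec n (\<lambda>j. X j \<omega> + E j \<omega>)) $ i - X i \<omega>)\<^sup>2)
    = (\<Sum>j<n. v j * (\<Sum>i<n. (H $$ (i, j) - (if i = j then 1 else 0))\<^sup>2) + w j * (\<Sum>i<n. (H $$ (i, j))\<^sup>2))"
proof -
  define a where "a i j = H $$ (i, j) - (if i = j then 1 else 0)" for i j
  define u where "u i \<omega> = (\<Sum>j<n. a i j * (X j \<omega> - \<mu>) + H $$ (i, j) * E j \<omega>)" for i \<omega>
  have error: "(H *\<^sub>v vec n (\<lambda>j. X j \<omega> + E j \<omega>)) $ i - X i \<omega> = u i \<omega>" if i: "i < n" for i \<omega>
  proof -
    have "(H *\<^sub>v vec n (\<lambda>j. X j \<omega> + E j \<omega>)) $ i = (\<Sum>j<n. H $$ (i, j) * (X j \<omega> + E j \<omega>))"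
      using H i by (auto simp: scalar_prod_def atLeast0LessThan intro!: sum.cong)
    also have "\<dots> = (\<Sum>j<n. H $$ (i, j) * (X j \<omega> - \<mu> + E j \<omega>)) + \<mu> * (\<Sum>j<n. H $$ (i, j))"
      by (simp add: algebra_simps sum.distrib sum_subtractf sum_distrib_left)
    also have "\<dots> = u i \<omega> + X i \<omega>"
      using rows[OF i] i
      by (simp add: u_def a_def algebra_simps sum.distrib sum_subtractf sum_mult_delta)
    finally show ?thesis
      by simp
  qed
  have "integral\<^sup>L M (\<lambda>\<omega>. \<Sum>i<n. ((H *\<^sub>v vec n (\<lambda>j. X j \<omega> + E j \<omega>)) $ i - X i \<omega>)\<^sup>2)
      = integral\<^sup>L M (\<lambda>\<omega>. \<Sum>i<n. (u i \<omega>)\<^sup>2)"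
    using error by simp
  also have "\<dots> = (\<Sum>i<n. \<Sum>j<n. (a i j)\<^sup>2 * v j + (H $$ (i, j))\<^sup>2 * w j)"
    using integral_square_lincomb[OF mom] unfolding u_def
    by (simp add: Bochner_Integration.integral_sum)
  also have "\<dots> = (\<Sum>j<n. v j * (\<Sum>i<n. (a i j)\<^sup>2) + w j * (\<Sum>i<n. (H $$ (i, j))\<^sup>2))"
    by (subst sum.swap) (simp add: sum.distrib sum_distrib_left mult_ac)
  finally show ?thesis
    unfolding a_def .
qed

lemma (in prob_space) indep_var_integral_mult_centered:
  fixes f g :: "'a \<Rightarrow> real"
  assumes "indep_var borel f borel g" "integrable M f" "integrable M g" "expectation f = 0"
  shows "expectation (\<lambda>\<omega>. f \<omega> * g \<omega>) = 0"
  using indep_var_lebesgue_integral[OF assms(1-3)] assms(4) by simp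

lemma independent_model_moments:
  fixes X E :: "nat \<Rightarrow> 'w \<Rightarrow> real"
  assumes "prob_space M" and s_nonneg: "\<forall>i<n. s i \<ge> 0"
    and X_indep: "prob_space.indep_vars M (\<lambda>_. borel) X {0..<n}"
    and X_gauss: "\<forall>i<n. distr M borel (X i) = gaussian \<mu> (s i)"
    and E_meas: "\<forall>i<n. E i \<in> borel_measurable M"
    and E_int: "\<forall>i<n. integrable M (E i)"
    and E_sq_int: "\<forall>i<n. integrable M (\<lambda>\<omega>. (E i \<omega>)\<^sup>2)"
    and E_cov: "\<forall>i<n. \<forall>j<n. integral\<^sup>L M (\<lambda>\<omega>. E i \<omega> * E j \<omega>) = (if i = j then (\<sigma> i)\<^sup>2 else 0)"
    and XE_indep: "prob_space.indep_var M
        (PiM {0..<n} (\<lambda>_. borel)) (\<lambda>\<omega>. \<lambda>i\<in>{0..<n}. X i \<omega>)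
        (PiM {0..<n} (\<lambda>_. borel)) (\<lambda>\<omega>. \<lambda>i\<in>{0..<n}. E i \<omega>)"
  shows "uncorrelated_moments M n (\<lambda>j \<omega>. X j \<omega> - \<mu>) E (\<lambda>j. (s j)\<^sup>2) (\<lambda>j. (\<sigma> j)\<^sup>2)"
proof -
  interpret P: prob_space M by fact
  define Z where "Z j \<omega> = X j \<omega> - \<mu>" for j \<omega>
  have X_meas: "X j \<in> borel_measurable M" if "j < n" for j
    using X_indep that unfolding P.indep_vars_def by auto
  then have Z_meas: "Z j \<in> borel_measurable M" if "j < n" for j
    unfolding Z_def using that by auto
  have Z: "integrable M (Z j)" "integral\<^sup>L M (Z j) = 0"
    "integrable M (\<lambda>\<omega>. (Z j \<omega>)\<^sup>2)" "integral\<^sup>L M (\<lambda>\<omega>. (Z j \<omega>)\<^sup>2) = (s j)\<^sup>2" if "j < n" for j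
    using gaussian_centered_moments[OF \<open>prob_space M\<close> X_meas[OF that]] X_gauss s_nonneg that
    unfolding Z_def by auto
  have ZZ: "integral\<^sup>L M (\<lambda>\<omega>. Z j \<omega> * Z k \<omega>) = (if j = k then (s j)\<^sup>2 else 0)"
    if jk: "j < n" "k < n" for j k
  proof (cases "j = k")
    case True
    then show ?thesis
      using Z(4)[OF jk(1)] by (simp add: power2_eq_square)
  next
    case False
    have "P.indep_var (PiM {j} (\<lambda>_. borel)) (\<lambda>\<omega>. restrict (\<lambda>i. X i \<omega>) {j})
                      (PiM {k} (\<lambda>_. borel)) (\<lambda>\<omega>. restrict (\<lambda>i. X i \<omega>) {k})"
      by (rule P.indep_var_restrict[OF X_indep]) (use False jk in auto)
    from P.indep_var_compose[OF this, of "\<lambda>f. f j - \<mu>" borel "\<lambda>f. f k - \<mu>" borel]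
    have "P.indep_var borel (Z j) borel (Z k)"
      unfolding Z_def comp_def by (simp add: measurable_component_singleton)
    then show ?thesis
      using P.indep_var_integral_mult_centered Z(1,2) jk False by simp
  qed
  have ZE: "integral\<^sup>L M (\<lambda>\<omega>. Z j \<omega> * E k \<omega>) = 0" if jk: "j < n" "k < n" for j k
  proof -
    from P.indep_var_compose[OF XE_indep, of "\<lambda>f. f j - \<mu>" borel "\<lambda>f. f k" borel]
    have "P.indep_var borel (Z j) borel (E k)"
      unfolding Z_def comp_def using jk by (simp add: measurable_component_singleton)
    then show ?thesis
      using P.indep_var_integral_mult_centered Z(1,2) E_int jk by simp
  qed
  show ?thesis
    unfolding uncorrelated_moments_def Z_def[symmetric]
    using ZZ ZE E_cov Z(3) Z_meas E_meas E_sq_int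
    by (auto intro!: integrable_mult_square_integrable)
qed

lemma noise_average_le:
  fixes d \<sigma>0 T :: real
  assumes n: "n > 0" and d: "0 \<le> d" "d \<le> 1" and T: "T \<le> (real n - 1) * \<sigma>0"
  shows "(1 / real n + d * (1 - 1 / real n)) * (\<sigma>0 + T) \<le> d * T + \<sigma>0"
proof -
  have "(1 / real n + d * (1 - 1 / real n)) * (\<sigma>0 + T) - (d * T + \<sigma>0)
      = (1 - d) * (T - (real n - 1) * \<sigma>0) / real n"
    using n by (simp add: field_simps)
  also have "\<dots> \<le> 0"
    using d T by (intro divide_nonpos_nonneg mult_nonneg_nonpos) auto
  finally show ?thesis
    by simp
qed

lemma sum_column_bounds_le:
  fixes c d :: real and s \<sigma> :: "nat \<Rightarrow> real"
  assumes n: "1 < n" and d: "0 \<le> d" "d \<le> 1"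
    and \<sigma>_sorted: "\<forall>i j. i \<le> j \<longrightarrow> j < n \<longrightarrow> (\<sigma> j)\<^sup>2 \<le> (\<sigma> i)\<^sup>2"
  shows "(\<Sum>j<n. (s j)\<^sup>2 * (c * (1 - 1 / real n)) + (\<sigma> j)\<^sup>2 * (1 / real n + d * (1 - 1 / real n)))
    \<le> c * (real n - 1) * ((1 / real n) * (\<Sum>i<n. (s i)\<^sup>2))
      + d * (real n - 1) * ((1 / (real n - 1)) * (\<Sum>i\<in>{1..<n}. (\<sigma> i)\<^sup>2)) + (\<sigma> 0)\<^sup>2"
proof -
  define T where "T = (\<Sum>i\<in>{1..<n}. (\<sigma> i)\<^sup>2)"
  have "{..<n} = insert 0 {1..<n}"
    using n by auto
  then have noise_sum: "(\<Sum>j<n. (\<sigma> j)\<^sup>2) = (\<sigma> 0)\<^sup>2 + T"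
    unfolding T_def by simp
  have distrib: "(\<Sum>j<n. f j * a + g j * b) = a * (\<Sum>j<n. f j) + b * (\<Sum>j<n. g j)"
    for f g :: "nat \<Rightarrow> real" and a b
    by (simp add: sum.distrib sum_distrib_left mult.commute)
  have "c * (1 - 1 / real n) = c * (real n - 1) * (1 / real n)"
    using n by (simp add: field_simps)
  then have "(\<Sum>j<n. (s j)\<^sup>2 * (c * (1 - 1 / real n)) + (\<sigma> j)\<^sup>2 * (1 / real n + d * (1 - 1 / real n)))
      = c * (real n - 1) * ((1 / real n) * (\<Sum>i<n. (s i)\<^sup>2))
        + (1 / real n + d * (1 - 1 / real n)) * ((\<sigma> 0)\<^sup>2 + T)"
    unfolding distrib noise_sum by simp
  moreover have "T \<le> (real n - 1) * (\<sigma> 0)\<^sup>2"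
    using sum_mono[of "{1..<n}" "\<lambda>i. (\<sigma> i)\<^sup>2" "\<lambda>_. (\<sigma> 0)\<^sup>2"] \<sigma>_sorted n
    unfolding T_def by (simp add: of_nat_diff)
  then have "(1 / real n + d * (1 - 1 / real n)) * ((\<sigma> 0)\<^sup>2 + T) \<le> d * T + (\<sigma> 0)\<^sup>2"
    using noise_average_le[OF _ d] n by simp
  ultimately show ?thesis
    using n unfolding T_def by simp
qed

theorem corollary5:
  fixes n :: nat and W :: "real mat" and M :: "'w measure"
    and X E :: "nat \<Rightarrow> 'w \<Rightarrow> real" and \<mu> \<alpha> :: real and s \<sigma> :: "nat \<Rightarrow> real"
  assumes n2: "n \<ge> 2"
    and graph: "weighted_connected_graph n W"
    and prob: "prob_space M"
    and s_nonneg: "\<forall>i<n. s i \<ge> 0"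
    and X_indep: "prob_space.indep_vars M (\<lambda>_. borel) X {0..<n}"
    and X_gauss: "\<forall>i<n. distr M borel (X i) = gaussian \<mu> (s i)"
    and E_meas: "\<forall>i<n. E i \<in> borel_measurable M"
    and E_int: "\<forall>i<n. integrable M (E i)"
    and E_sq_int: "\<forall>i<n. integrable M (\<lambda>\<omega>. (E i \<omega>)\<^sup>2)"
    and E_mean: "\<forall>i<n. integral\<^sup>L M (E i) = 0"
    and E_cov: "\<forall>i<n. \<forall>j<n. integral\<^sup>L M (\<lambda>\<omega>. E i \<omega> * E j \<omega>) = (if i = j then (\<sigma> i)\<^sup>2 else 0)"
    and \<sigma>_sorted: "\<forall>i j. i \<le> j \<longrightarrow> j < n \<longrightarrow> (\<sigma> j)\<^sup>2 \<le> (\<sigma> i)\<^sup>2"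
    and XE_indep: "prob_space.indep_var M
        (PiM {0..<n} (\<lambda>_. borel)) (\<lambda>\<omega>. \<lambda>i\<in>{0..<n}. X i \<omega>)
        (PiM {0..<n} (\<lambda>_. borel)) (\<lambda>\<omega>. \<lambda>i\<in>{0..<n}. E i \<omega>)"
    and \<alpha>_pos: "\<alpha> > 0"
  shows "smoothing_mse M n W X E \<alpha> \<le>
     (1 / (1 + 1 / (\<alpha> * eigs (laplacian n W) ! (n - 1))))\<^sup>2 * (real n - 1)
        * ((1 / real n) * (\<Sum>i<n. (s i)\<^sup>2))
   + (1 / (1 + \<alpha> * eigs (laplacian n W) ! 1))\<^sup>2 * (real n - 1)
        * ((1 / (real n - 1)) * (\<Sum>i\<in>{1..<n}. (\<sigma> i)\<^sup>2))
   + (\<sigma> 0)\<^sup>2"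
proof -
  let ?L = "laplacian n W"
  define lam where "lam k = eigs ?L ! k" for k
  have W: "\<forall>i<n. \<forall>j<n. W $$ (i, j) = W $$ (j, i)" "\<forall>i<n. \<forall>j<n. W $$ (i, j) \<ge> 0"
    using graph unfolding weighted_connected_graph_def by auto
  obtain U where spec: "sorted_psd_spectrum n U lam" and L: "?L = spectral_mat n U lam"
    using laplacian_sorted_psd_spectrum[OF W] unfolding lam_def by metis
  interpret sorted_psd_spectrum n U lam
    by (fact spec)
  have n: "1 < n"
    using n2 by simp
  have "uncorrelated_moments M n (\<lambda>j \<omega>. X j \<omega> - \<mu>) E (\<lambda>j. (s j)\<^sup>2) (\<lambda>j. (\<sigma> j)\<^sup>2)"
    using prob s_nonneg X_indep X_gauss E_meas E_int E_sq_int E_cov XE_indep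
    by (rule independent_model_moments)
  then have "smoothing_mse M n W X E \<alpha>
      = (\<Sum>j<n. (s j)\<^sup>2 * (\<Sum>i<n. (smoother \<alpha> $$ (i, j) - (if i = j then 1 else 0))\<^sup>2)
          + (\<sigma> j)\<^sup>2 * (\<Sum>i<n. (smoother \<alpha> $$ (i, j))\<^sup>2))"
    unfolding smoothing_mse_def Let_def L the_mat_inverse_eq_smoother[OF \<alpha>_pos]
    by (intro mse_linear_smoother smoother_row_sum) (simp add: smoother_def)
  also have "\<dots> \<le> (\<Sum>j<n. (s j)\<^sup>2 * ((1 / (1 + 1 / (\<alpha> * lam (n - 1))))\<^sup>2 * (1 - 1 / real n))
      + (\<sigma> j)\<^sup>2 * (1 / real n + (1 / (1 + \<alpha> * lam 1))\<^sup>2 * (1 - 1 / real n)))"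
    using smoother_bias_col_norm[OF \<alpha>_pos] smoother_variance_col_norm[OF \<alpha>_pos n]
    by (intro sum_mono add_mono mult_left_mono) auto
  also have "\<dots> \<le> (1 / (1 + 1 / (\<alpha> * lam (n - 1))))\<^sup>2 * (real n - 1) * ((1 / real n) * (\<Sum>i<n. (s i)\<^sup>2))
      + (1 / (1 + \<alpha> * lam 1))\<^sup>2 * (real n - 1) * ((1 / (real n - 1)) * (\<Sum>i\<in>{1..<n}. (\<sigma> i)\<^sup>2))
      + (\<sigma> 0)\<^sup>2"
    using n \<sigma>_sorted smoother_response_le_one[OF \<alpha>_pos, of 1]
    by (intro sum_column_bounds_le) (auto simp: power_le_one)
  finally show ?thesis
    unfolding lam_def .
qed

end
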